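(* Let $\tau=(\xi_n)_{n\in\omega}$ be an infinite trace of tidy formulas. Then (1) there is a unique fixpoint formula $\xi=\eta x.\chi$ which occurs infinitely often on $\tau$ and satisfies $\xi\twoheadrightarrow_C^{\xi}\xi_n$ (i.e. $\xi_n\sqsubseteq_C\xi$) for cofinitely many $n$; (2) the number $\max\{\Omega_g(\phi)\mid \phi \text{ a fixpoint formula occurring infinitely often on }\tau\}$ is even iff $\eta=\nu$.
   Context: Syntax. Formulas of the modal $\mu$-calculus are taken in negation normal form: $\phi ::= \top \mid \bot \mid p \mid \neg p \mid x \mid \phi\land\phi\mid\phi\lor\phi\mid\Diamond\phi\mid\Box\phi\mid\mu x.\phi\mid\nu x.\phi$, where $p$ ranges over proposition letters and $x$ over an infinite supply of variables (which occur only positively). The formulas $\top,\bot,p,\neg p,x$ are atomic. $\mathrm{FV}(\phi)$ and $\mathrm{BV}(\phi)$ are the sets of free and bound variables of $\phi$; $\phi$ is tidy if $\mathrm{FV}(\phi)\cap\mathrm{BV}(\phi)=\varnothing$. A fixpoint formula is one of the form $\eta x.\chi$ with $\eta\in\{\mu,\nu\}$; it has type $\eta$, where $\mu$ counts as odd and $\nu$ as even parity, and $\bar\eta$ denotes the other operator. $\chi[\xi/x]$ is the result of replacing every free occurrence of $x$ in $\chi$ by $\xi$; $\xi$ is free for $x$ in $\chi$ if no free variable of $\xi$ becomes bound in $\chi[\xi/x]$. Traces and closure. The trace relation $\rightarrow_C$: $\phi_0\odot\phi_1\rightarrow_C\phi_i$ for $\odot\in\{\land,\lor\}$, $i\in\{0,1\}$;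 $\heartsuit\phi\rightarrow_C\phi$ for $\heartsuit\in\{\Diamond,\Box\}$; $\eta x.\phi\rightarrow_C\phi[\eta x.\phi/x]$; atomic formulas have no successors. $\twoheadrightarrow_C$ is the reflexive transitive closure of $\rightarrow_C$, $\mathrm{Clos}(\phi)=\{\psi\mid\phi\twoheadrightarrow_C\psi\}$ (a finite set), and a trace is a finite or infinite sequence of formulas with consecutive members related by $\rightarrow_C$. Write $\phi\equiv_C\psi$ iff $\phi\twoheadrightarrow_C\psi$ and $\psi\twoheadrightarrow_C\phi$; its equivalence classes are (closure) clusters, and $C(\phi)$ is the cluster of $\phi$. Free subformulas. $\phi\trianglelefteq_f\psi$ iff $\psi=\chi[\phi/y]$ for some formula $\chi$ and variable $y$ with $y\in\mathrm{FV}(\chi)$ and $\phi$ free for $y$ in $\chi$. Closure order. For a formula $\psi$, write $\rho\twoheadrightarrow_C^{\psi}\sigma$ iff there is a trace $\rho=\chi_0\rightarrow_C\cdots\rightarrow_C\chi_n=\sigma$ ($n\ge0$) with $\psi\trianglelefteq_f\chi_i$ for all $i\le n$. For fixpoint formulas $\phi,\psi$: $\phi\sqsubseteq_C\psi$ iff $\psi\twoheadrightarrow_C^{\psi}\phi$; $\phi\sqsubset_C\psi$ iff $\phi\sqsubseteq_C\psi$ and $\psi\not\sqsubseteq_C\phi$. Chains. An alternating $\sqsubset_C$-chain of length $n$ is a sequence $\eta_1x_1.\chi_1,\dots,\eta_nx_n.\chi_n$ of tidy fixpoint formulas with $\eta_ix_i.\chi_i\sqsubset_C\eta_{i+1}x_{i+1}.\chi_{i+1}$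 and $\eta_{i+1}=\bar\eta_i$ for all $i<n$; it starts at the first and leads up to the last formula. For a tidy fixpoint formula $\xi$, $h^\uparrow(\xi)$ is the maximal length of an alternating $\sqsubset_C$-chain starting at $\xi$. For a cluster $C$, $\mathit{cd}(C)$ is the maximal length of an alternating $\sqsubset_C$-chain inside $C$. Global priority map. For a tidy fixpoint formula $\psi=\eta y.\phi$ let $d=\mathit{cd}(C(\psi))-h^\uparrow(\psi)$ and set $\Omega_g(\psi)=d$ if $d$ has parity $\eta$ and $\Omega_g(\psi)=d+1$ otherwise; $\Omega_g$ is undefined on non-fixpoint formulas. *)

theory Defs
  imports Main
begin

datatype fp = Mu | Nu

(* 'p: proposition letters; variables are natural numbers (an infinite supply) *)
datatype 'p fml =
    Top | Bot | Lit 'p | NLit 'p | Var nat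
  | And "'p fml" "'p fml" | Or "'p fml" "'p fml"
  | Dia "'p fml" | Box "'p fml"
  | Fix fp nat "'p fml"

fun FV :: "'p fml \<Rightarrow> nat set" where
  "FV Top = {}" | "FV Bot = {}" | "FV (Lit p) = {}" | "FV (NLit p) = {}"
| "FV (Var x) = {x}"
| "FV (And a b) = FV a \<union> FV b" | "FV (Or a b) = FV a \<union> FV b"
| "FV (Dia a) = FV a" | "FV (Box a) = FV a"
| "FV (Fix e x a) = FV a - {x}"

fun BV :: "'p fml \<Rightarrow> nat set" where
  "BV Top = {}" | "BV Bot = {}" | "BV (Lit p) = {}" | "BV (NLit p) = {}"
| "BV (Var x) = {}"
| "BV (And a b) = BV a \<union> BV b" | "BV (Or a b) = BV a \<union> BV b"
| "BV (Dia a) = BV a" | "BV (Box a) = BV a"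
| "BV (Fix e x a) = insert x (BV a)"

definition tidy :: "'p fml \<Rightarrow> bool" where
  "tidy \<phi> \<longleftrightarrow> FV \<phi> \<inter> BV \<phi> = {}"

fun is_fix :: "'p fml \<Rightarrow> bool" where
  "is_fix (Fix e x a) = True" | "is_fix _ = False"

(* subst \<chi> \<xi> x  =  \<chi>[\<xi>/x]: replace every free occurrence of x in \<chi> by \<xi> (no renaming) *)
fun subst :: "'p fml \<Rightarrow> 'p fml \<Rightarrow> nat \<Rightarrow> 'p fml" where
  "subst (Var y) \<xi> x = (if y = x then \<xi> else Var y)"
| "subst (And a b) \<xi> x = And (subst a \<xi> x) (subst b \<xi> x)"
| "subst (Or a b) \<xi> x = Or (subst a \<xi> x) (subst b \<xi> x)"
| "subst (Dia a) \<xi> x = Dia (subst a \<xi> x)"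
| "subst (Box a) \<xi> x = Box (subst a \<xi> x)"
| "subst (Fix e y a) \<xi> x = (if y = x then Fix e y a else Fix e y (subst a \<xi> x))"
| "subst a \<xi> x = a"

fun free_for :: "'p fml \<Rightarrow> nat \<Rightarrow> 'p fml \<Rightarrow> bool" where
  "free_for \<xi> x (And a b) = (free_for \<xi> x a \<and> free_for \<xi> x b)"
| "free_for \<xi> x (Or a b) = (free_for \<xi> x a \<and> free_for \<xi> x b)"
| "free_for \<xi> x (Dia a) = free_for \<xi> x a"
| "free_for \<xi> x (Box a) = free_for \<xi> x a"
| "free_for \<xi> x (Fix e y a) =
     (y = x \<or> ((x \<notin> FV a \<or> y \<notin> FV \<xi>) \<and> free_for \<xi> x a))"
| "free_for \<xi> x a = True"

inductive step :: "'p fml \<Rightarrow> 'p fml \<Rightarrow> bool" where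
  and_l: "step (And a b) a" | and_r: "step (And a b) b"
| or_l: "step (Or a b) a" | or_r: "step (Or a b) b"
| dia: "step (Dia a) a" | box: "step (Box a) a"
| unfold: "step (Fix e x a) (subst a (Fix e x a) x)"

definition Clos :: "'p fml \<Rightarrow> 'p fml set" where
  "Clos \<phi> = {\<psi>. step\<^sup>*\<^sup>* \<phi> \<psi>}"

definition clos_eq :: "'p fml \<Rightarrow> 'p fml \<Rightarrow> bool" where
  "clos_eq \<phi> \<psi> \<longleftrightarrow> step\<^sup>*\<^sup>* \<phi> \<psi> \<and> step\<^sup>*\<^sup>* \<psi> \<phi>"

definition cluster :: "'p fml \<Rightarrow> 'p fml set" where
  "cluster \<phi> = {\<psi>. clos_eq \<phi> \<psi>}"

definition free_sub :: "'p fml \<Rightarrow> 'p fml \<Rightarrow> bool" where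
  "free_sub \<phi> \<psi> \<longleftrightarrow> (\<exists>\<chi> y. \<psi> = subst \<chi> \<phi> y \<and> y \<in> FV \<chi> \<and> free_for \<phi> y \<chi>)"

(* reach_in \<psi> \<rho> \<sigma>:  \<rho> \<twoheadrightarrow>_C^\<psi> \<sigma> *)
definition reach_in :: "'p fml \<Rightarrow> 'p fml \<Rightarrow> 'p fml \<Rightarrow> bool" where
  "reach_in \<psi> \<rho> \<sigma> \<longleftrightarrow> (\<exists>n f. f 0 = \<rho> \<and> f n = \<sigma> \<and> (\<forall>i<n. step (f i) (f (Suc i)))
                              \<and> (\<forall>i\<le>n. free_sub \<psi> (f i)))"

definition clos_le :: "'p fml \<Rightarrow> 'p fml \<Rightarrow> bool" where
  "clos_le \<phi> \<psi> \<longleftrightarrow> is_fix \<phi> \<and> is_fix \<psi> \<and> reach_in \<psi> \<psi> \<phi>"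

definition clos_less :: "'p fml \<Rightarrow> 'p fml \<Rightarrow> bool" where
  "clos_less \<phi> \<psi> \<longleftrightarrow> clos_le \<phi> \<psi> \<and> \<not> clos_le \<psi> \<phi>"

fun fp_of :: "'p fml \<Rightarrow> fp" where
  "fp_of (Fix e x a) = e" | "fp_of _ = Mu"

definition alt_chain :: "'p fml list \<Rightarrow> bool" where
  "alt_chain cs \<longleftrightarrow> cs \<noteq> [] \<and> (\<forall>c\<in>set cs. is_fix c \<and> tidy c)
     \<and> (\<forall>i. Suc i < length cs \<longrightarrow> clos_less (cs ! i) (cs ! Suc i)
                                  \<and> fp_of (cs ! Suc i) \<noteq> fp_of (cs ! i))"

definition h_up :: "'p fml \<Rightarrow> nat" where
  "h_up \<xi> = Max {length cs | cs. alt_chain cs \<and> hd cs = \<xi>}"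

definition cd :: "'p fml set \<Rightarrow> nat" where
  "cd C = Max {length cs | cs. alt_chain cs \<and> set cs \<subseteq> C}"

definition has_parity :: "int \<Rightarrow> fp \<Rightarrow> bool" where
  "has_parity d e \<longleftrightarrow> (if e = Nu then even d else odd d)"

(* \<Omega>_g, meaningful only on tidy fixpoint formulas *)
definition Omega_g :: "'p fml \<Rightarrow> int" where
  "Omega_g \<psi> = (let d = int (cd (cluster \<psi>)) - int (h_up \<psi>)
                in if has_parity d (fp_of \<psi>) then d else d + 1)"

definition is_trace :: "(nat \<Rightarrow> 'p fml) \<Rightarrow> bool" where
  "is_trace \<tau> \<longleftrightarrow> (\<forall>n. step (\<tau> n) (\<tau> (Suc n)))"

end

theory Submission
  imports Defs "HOL-Library.Infinite_Set"
begin

text \<open>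
A trace step either shrinks the formula or unfolds a fixpoint, and a trace of tidy formulas stays
inside the finite closure of its first formula, so from some point on it only visits formulas that
recur infinitely often, and among them there are fixpoints. Let \<open>\<xi>\<close> be a recurring fixpoint of
least size. A step can only create a new free occurrence of \<open>\<xi>\<close> by unfolding a fixpoint that is
smaller than \<open>\<xi>\<close>; so once the trace has passed its transient part and visits \<open>\<xi>\<close>, the formula
\<open>\<xi>\<close> remains a free subformula forever, since otherwise it could never recur. Two such fixpoints
would be free subformulas of each other, hence equal.

Every other recurring fixpoint \<open>\<phi>\<close> is then strictly below \<open>\<xi>\<close> in \<open>\<sqsubset>\<^sub>C\<close> and lies in its cluster.
Prolonging a longest alternating chain starting at \<open>\<xi>\<close> by \<open>\<phi>\<close> shows \<open>h\<up>(\<phi>) \<ge> h\<up>(\<xi>)\<close>, with strict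
inequality if the two have different types, which gives \<open>\<Omega>\<^sub>g(\<phi>) \<le> \<Omega>\<^sub>g(\<xi>)\<close>. Finally \<open>\<Omega>\<^sub>g(\<xi>)\<close> has the
parity of the type of \<open>\<xi>\<close> by construction.
\<close>


section \<open>Free occurrences\<close>

inductive free_occ :: "'p fml \<Rightarrow> 'p fml \<Rightarrow> bool" where
  refl: "free_occ \<xi> \<xi>"
| and_l: "free_occ \<xi> a \<Longrightarrow> free_occ \<xi> (And a b)"
| and_r: "free_occ \<xi> b \<Longrightarrow> free_occ \<xi> (And a b)"
| or_l: "free_occ \<xi> a \<Longrightarrow> free_occ \<xi> (Or a b)"
| or_r: "free_occ \<xi> b \<Longrightarrow> free_occ \<xi> (Or a b)"
| dia: "free_occ \<xi> a \<Longrightarrow> free_occ \<xi> (Dia a)"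
| box: "free_occ \<xi> a \<Longrightarrow> free_occ \<xi> (Box a)"
| fixp: "free_occ \<xi> a \<Longrightarrow> x \<notin> FV \<xi> \<Longrightarrow> free_occ \<xi> (Fix e x a)"

lemma free_occ_FV: "free_occ \<xi> \<phi> \<Longrightarrow> FV \<xi> \<subseteq> FV \<phi>"
  by (induction rule: free_occ.induct) auto

lemma free_occ_trans: "free_occ \<xi> \<psi> \<Longrightarrow> free_occ \<chi> \<xi> \<Longrightarrow> free_occ \<chi> \<psi>"
  by (induction rule: free_occ.induct) (auto intro: free_occ.intros dest: free_occ_FV)

lemma free_occ_size: "free_occ \<xi> \<phi> \<Longrightarrow> size \<xi> \<le> size \<phi>"
  by (induction rule: free_occ.induct) auto

lemma free_occ_size_eq: "free_occ \<xi> \<phi> \<Longrightarrow> size \<phi> \<le> size \<xi> \<Longrightarrow> \<xi> = \<phi>"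
  by (induction rule: free_occ.induct) (auto dest: free_occ_size)

lemma free_occ_antisym: "free_occ \<xi> \<phi> \<Longrightarrow> free_occ \<phi> \<xi> \<Longrightarrow> \<xi> = \<phi>"
  using free_occ_size free_occ_size_eq by blast

lemma subst_nofree: "x \<notin> FV a \<Longrightarrow> subst a \<xi> x = a"
  by (induction a) auto

lemma free_for_nofree: "x \<notin> FV a \<Longrightarrow> free_for \<xi> x a"
  by (induction a) auto

lemma free_occ_subst: "y \<in> FV \<chi> \<Longrightarrow> free_for \<xi> y \<chi> \<Longrightarrow> free_occ \<xi> (subst \<chi> \<xi> y)"
  by (induction \<chi>) (auto intro: free_occ.intros)

lemma free_occ_imp_subst:
  assumes "free_occ \<xi> \<phi>" and "y \<notin> FV \<phi> \<union> BV \<phi>"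
  shows "\<exists>\<chi>. \<phi> = subst \<chi> \<xi> y \<and> y \<in> FV \<chi> \<and> free_for \<xi> y \<chi>"
  using assms
proof (induction rule: free_occ.induct)
  case (refl \<xi>)
  show ?case by (intro exI[of _ "Var y"]) auto
next
  case (and_l \<xi> a b)
  then obtain \<chi> where "a = subst \<chi> \<xi> y" "y \<in> FV \<chi>" "free_for \<xi> y \<chi>" by auto
  with and_l.prems show ?case by (intro exI[of _ "And \<chi> b"]) (auto simp: subst_nofree free_for_nofree)
next
  case (and_r \<xi> b a)
  then obtain \<chi> where "b = subst \<chi> \<xi> y" "y \<in> FV \<chi>" "free_for \<xi> y \<chi>" by auto
  with and_r.prems show ?case by (intro exI[of _ "And a \<chi>"]) (auto simp: subst_nofree free_for_nofree)
next
  case (or_l \<xi> a b)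
  then obtain \<chi> where "a = subst \<chi> \<xi> y" "y \<in> FV \<chi>" "free_for \<xi> y \<chi>" by auto
  with or_l.prems show ?case by (intro exI[of _ "Or \<chi> b"]) (auto simp: subst_nofree free_for_nofree)
next
  case (or_r \<xi> b a)
  then obtain \<chi> where "b = subst \<chi> \<xi> y" "y \<in> FV \<chi>" "free_for \<xi> y \<chi>" by auto
  with or_r.prems show ?case by (intro exI[of _ "Or a \<chi>"]) (auto simp: subst_nofree free_for_nofree)
next
  case (dia \<xi> a)
  then obtain \<chi> where "a = subst \<chi> \<xi> y" "y \<in> FV \<chi>" "free_for \<xi> y \<chi>" by auto
  then show ?case by (intro exI[of _ "Dia \<chi>"]) auto
next
  case (box \<xi> a)
  then obtain \<chi> where "a = subst \<chi> \<xi> y" "y \<in> FV \<chi>" "free_for \<xi> y \<chi>" by auto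
  then show ?case by (intro exI[of _ "Box \<chi>"]) auto
next
  case (fixp \<xi> a x e)
  then obtain \<chi> where "a = subst \<chi> \<xi> y" "y \<in> FV \<chi>" "free_for \<xi> y \<chi>" by auto
  with fixp show ?case by (intro exI[of _ "Fix e x \<chi>"]) auto
qed

lemma free_sub_iff_free_occ: "free_sub \<xi> \<phi> \<longleftrightarrow> free_occ \<xi> \<phi>"
proof
  assume "free_sub \<xi> \<phi>"
  then show "free_occ \<xi> \<phi>" unfolding free_sub_def using free_occ_subst by blast
next
  assume "free_occ \<xi> \<phi>"
  have "finite (FV \<phi> \<union> BV \<phi>)" by (induction \<phi>) auto
  then obtain y :: nat where "y \<notin> FV \<phi> \<union> BV \<phi>" using ex_new_if_finite infinite_UNIV_nat by blast
  with \<open>free_occ \<xi> \<phi>\<close> show "free_sub \<xi> \<phi>" unfolding free_sub_def by (blast dest: free_occ_imp_subst)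
qed

lemma size_subst_ge: "x \<in> FV a \<Longrightarrow> size \<xi> \<le> size (subst a \<xi> x)"
  by (induction a) auto

lemma size_subst_gt: "x \<in> FV a \<Longrightarrow> a \<noteq> Var x \<Longrightarrow> size \<xi> < size (subst a \<xi> x)"
  by (cases a) (auto dest: size_subst_ge[where \<xi> = \<xi>])

lemma free_occ_Fix_FV: "free_occ \<xi> (Fix e x a) \<Longrightarrow> x \<notin> FV \<xi>"
  by (cases rule: free_occ.cases) auto

lemma subst_self_cases:
  "(x \<notin> FV a \<and> subst a \<phi> x = a) \<or> a = Var x \<or> size \<phi> < size (subst a \<phi> x)"
  by (cases "x \<in> FV a"; cases "a = Var x") (auto simp: subst_nofree size_subst_gt)

lemma free_occ_subst_cases:
  assumes "free_occ \<xi> (subst a \<phi> x)"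
  shows "(free_occ \<xi> a \<and> x \<notin> FV \<xi>) \<or> free_occ \<xi> \<phi> \<or> size \<phi> < size \<xi>"
  using assms
proof (induction a)
  case (Var z)
  then show ?case by (cases "z = x") (auto elim: free_occ.cases intro: free_occ.refl)
next
  case (And b c)
  then show ?case using subst_self_cases[where a = "And b c" and \<phi> = \<phi> and x = x]
    by (auto elim!: free_occ.cases[of _ "And _ _"] intro: free_occ.intros)
next
  case (Or b c)
  then show ?case using subst_self_cases[where a = "Or b c" and \<phi> = \<phi> and x = x]
    by (auto elim!: free_occ.cases[of _ "Or _ _"] intro: free_occ.intros)
next
  case (Dia b)
  then show ?case using subst_self_cases[where a = "Dia b" and \<phi> = \<phi> and x = x]
    by (auto elim!: free_occ.cases[of _ "Dia _"] intro: free_occ.intros)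
next
  case (Box b)
  then show ?case using subst_self_cases[where a = "Box b" and \<phi> = \<phi> and x = x]
    by (auto elim!: free_occ.cases[of _ "Box _"] intro: free_occ.intros)
next
  case (Fix e z b)
  then show ?case
    using subst_self_cases[where a = "Fix e z b" and \<phi> = \<phi> and x = x] free_occ_Fix_FV[of \<xi> e x b]
    by (cases "z = x") (auto elim!: free_occ.cases[of _ "Fix _ _ _"] intro: free_occ.intros)
qed (auto elim: free_occ.cases intro: free_occ.refl)

lemma step_creates_free_occ:
  "step \<rho> \<sigma> \<Longrightarrow> free_occ \<xi> \<sigma> \<Longrightarrow> \<not> free_occ \<xi> \<rho> \<Longrightarrow> is_fix \<rho> \<and> size \<rho> < size \<xi>"
proof (induction rule: step.induct)
  case (unfold e x a)
  then show ?case using free_occ_subst_cases[of \<xi> a "Fix e x a" x] by (auto intro: free_occ.intros)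
qed (auto intro: free_occ.intros)


section \<open>Finiteness of the closure\<close>

fun ssubst :: "'p fml \<Rightarrow> (nat \<Rightarrow> 'p fml) \<Rightarrow> 'p fml" where
  "ssubst (Var y) \<sigma> = \<sigma> y"
| "ssubst (And a b) \<sigma> = And (ssubst a \<sigma>) (ssubst b \<sigma>)"
| "ssubst (Or a b) \<sigma> = Or (ssubst a \<sigma>) (ssubst b \<sigma>)"
| "ssubst (Dia a) \<sigma> = Dia (ssubst a \<sigma>)"
| "ssubst (Box a) \<sigma> = Box (ssubst a \<sigma>)"
| "ssubst (Fix e x a) \<sigma> = Fix e x (ssubst a (\<sigma>(x := Var x)))"
| "ssubst a \<sigma> = a"

text \<open>
The Fischer--Ladner closure of \<open>a\<close> under \<open>\<sigma>\<close>: the formulas \<open>\<psi>[\<sigma>']\<close> for the subformulas \<open>\<psi>\<close>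
of \<open>a\<close>, where \<open>\<sigma>'\<close> extends \<open>\<sigma>\<close> by mapping each variable bound above \<open>\<psi>\<close> to its instantiated
binder.
\<close>

fun subst_clos :: "'p fml \<Rightarrow> (nat \<Rightarrow> 'p fml) \<Rightarrow> 'p fml set" where
  "subst_clos (And a b) \<sigma> = insert (ssubst (And a b) \<sigma>) (subst_clos a \<sigma> \<union> subst_clos b \<sigma>)"
| "subst_clos (Or a b) \<sigma> = insert (ssubst (Or a b) \<sigma>) (subst_clos a \<sigma> \<union> subst_clos b \<sigma>)"
| "subst_clos (Dia a) \<sigma> = insert (ssubst (Dia a) \<sigma>) (subst_clos a \<sigma>)"
| "subst_clos (Box a) \<sigma> = insert (ssubst (Box a) \<sigma>) (subst_clos a \<sigma>)"
| "subst_clos (Fix e x a) \<sigma> =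
     insert (ssubst (Fix e x a) \<sigma>) (subst_clos a (\<sigma>(x := ssubst (Fix e x a) \<sigma>)))"
| "subst_clos a \<sigma> = {ssubst a \<sigma>}"

lemma finite_subst_clos: "finite (subst_clos a \<sigma>)"
  by (induction a arbitrary: \<sigma>) auto

lemma ssubst_in_subst_clos: "ssubst a \<sigma> \<in> subst_clos a \<sigma>"
  by (cases a) auto

lemma ssubst_Var: "ssubst a Var = a"
  by (induction a) (auto simp: fun_upd_triv)

lemma FV_ssubst: "FV (ssubst a \<sigma>) \<subseteq> (\<Union>y\<in>FV a. FV (\<sigma> y))"
proof (induction a arbitrary: \<sigma>)
  case (Fix e x a)
  then show ?case by (fastforce split: if_splits)
qed fastforce+

lemma subst_ssubst:
  assumes "\<sigma> x = Var x" and "\<forall>y\<in>FV a - {x}. x \<notin> FV (\<sigma> y)"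
  shows "subst (ssubst a \<sigma>) \<phi> x = ssubst a (\<sigma>(x := \<phi>))"
  using assms
proof (induction a arbitrary: \<sigma>)
  case (Fix e z b)
  show ?case
  proof (cases "z = x")
    case False
    have "subst (ssubst (Fix e z b) \<sigma>) \<phi> x = Fix e z (subst (ssubst b (\<sigma>(z := Var z))) \<phi> x)"
      using False by simp
    also have "\<dots> = Fix e z (ssubst b (\<sigma>(z := Var z, x := \<phi>)))"
      using Fix.prems False by (subst Fix.IH) auto
    also have "\<dots> = ssubst (Fix e z b) (\<sigma>(x := \<phi>))"
      using False by (simp only: ssubst.simps fun_upd_twist[OF False])
    finally show ?thesis .
  qed (simp only: ssubst.simps subst.simps simp_thms if_True fun_upd_upd)
qed (auto simp: subst_nofree)

text \<open>
Closure under steps, relative to a set \<open>T\<close> absorbing the successors of the substituted formulas;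
\<open>V\<close> bounds their free variables, which the binders of \<open>a\<close> must therefore not capture.
\<close>

lemma subst_clos_step:
  assumes "\<forall>y\<in>FV a. FV (\<sigma> y) \<subseteq> V" and "BV a \<inter> V = {}"
    and "\<forall>y\<in>FV a. \<forall>w. step (\<sigma> y) w \<longrightarrow> w \<in> T"
    and "\<rho> \<in> subst_clos a \<sigma>" and "step \<rho> w"
  shows "w \<in> subst_clos a \<sigma> \<union> T"
  using assms
proof (induction a arbitrary: \<sigma> T \<rho> w)
  case (Fix e x a)
  define F where "F = ssubst (Fix e x a) \<sigma>"
  have FV_F: "FV F \<subseteq> V"
    using FV_ssubst[of "Fix e x a" \<sigma>] Fix.prems(1) unfolding F_def by blast
  have unfold_F: "w' \<in> subst_clos (Fix e x a) \<sigma>" if "step F w'" for w'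
  proof -
    have "w' = subst (ssubst a (\<sigma>(x := Var x))) F x"
      using that unfolding F_def by (auto elim: step.cases)
    also have "\<dots> = ssubst a (\<sigma>(x := F))"
      using Fix.prems(1,2) by (subst subst_ssubst) auto
    finally show ?thesis using ssubst_in_subst_clos[of a "\<sigma>(x := F)"] unfolding F_def by auto
  qed
  from Fix.prems(4) consider "\<rho> = F" | "\<rho> \<in> subst_clos a (\<sigma>(x := F))"
    unfolding F_def by auto
  then show ?case
  proof cases
    case 1
    then show ?thesis using unfold_F Fix.prems(5) by blast
  next
    case 2
    have "w \<in> subst_clos a (\<sigma>(x := F)) \<union> (T \<union> subst_clos (Fix e x a) \<sigma>)"
    proof (rule Fix.IH[OF _ _ _ 2 Fix.prems(5)])
      show "\<forall>y\<in>FV a. FV ((\<sigma>(x := F)) y) \<subseteq> V" using Fix.prems(1) FV_F by auto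
      show "BV a \<inter> V = {}" using Fix.prems(2) by auto
      show "\<forall>y\<in>FV a. \<forall>w. step ((\<sigma>(x := F)) y) w \<longrightarrow> w \<in> T \<union> subst_clos (Fix e x a) \<sigma>"
        using Fix.prems(3) unfold_F by auto
    qed
    then show ?thesis unfolding F_def by auto
  qed
next
  case (And a b)
  have "\<rho> \<in> subst_clos a \<sigma> \<Longrightarrow> w \<in> subst_clos a \<sigma> \<union> T"
    and "\<rho> \<in> subst_clos b \<sigma> \<Longrightarrow> w \<in> subst_clos b \<sigma> \<union> T"
    using And.prems by (intro And.IH; auto)+
  with And.prems(4,5) show ?case by (auto elim: step.cases simp: ssubst_in_subst_clos)
next
  case (Or a b)
  have "\<rho> \<in> subst_clos a \<sigma> \<Longrightarrow> w \<in> subst_clos a \<sigma> \<union> T"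
    and "\<rho> \<in> subst_clos b \<sigma> \<Longrightarrow> w \<in> subst_clos b \<sigma> \<union> T"
    using Or.prems by (intro Or.IH; auto)+
  with Or.prems(4,5) show ?case by (auto elim: step.cases simp: ssubst_in_subst_clos)
next
  case (Dia a)
  have "\<rho> \<in> subst_clos a \<sigma> \<Longrightarrow> w \<in> subst_clos a \<sigma> \<union> T"
    using Dia.prems by (intro Dia.IH) auto
  with Dia.prems(4,5) show ?case by (auto elim: step.cases simp: ssubst_in_subst_clos)
next
  case (Box a)
  have "\<rho> \<in> subst_clos a \<sigma> \<Longrightarrow> w \<in> subst_clos a \<sigma> \<union> T"
    using Box.prems by (intro Box.IH) auto
  with Box.prems(4,5) show ?case by (auto elim: step.cases simp: ssubst_in_subst_clos)
qed (auto elim: step.cases)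

lemma Clos_subset_subst_clos:
  assumes "tidy \<phi>"
  shows "Clos \<phi> \<subseteq> subst_clos \<phi> Var"
proof
  fix \<psi> assume "\<psi> \<in> Clos \<phi>"
  then have "step\<^sup>*\<^sup>* \<phi> \<psi>" unfolding Clos_def by simp
  then show "\<psi> \<in> subst_clos \<phi> Var"
  proof (induction rule: rtranclp_induct)
    case base
    show ?case using ssubst_in_subst_clos[of \<phi> Var] by (simp add: ssubst_Var)
  next
    case (step \<rho> \<sigma>)
    have "\<sigma> \<in> subst_clos \<phi> Var \<union> {}"
      using assms step by (intro subst_clos_step[where V = "FV \<phi>"])
        (auto simp: tidy_def elim: step.cases)
    then show ?case by simp
  qed
qed

lemma finite_Clos: "tidy \<phi> \<Longrightarrow> finite (Clos \<phi>)"
  using Clos_subset_subst_clos finite_subst_clos by (rule finite_subset)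

lemma trace_rtranclp:
  assumes "is_trace \<tau>" and "i \<le> j"
  shows "step\<^sup>*\<^sup>* (\<tau> i) (\<tau> j)"
  using assms(2)
proof (induction j rule: dec_induct)
  case (step k)
  then show ?case using assms(1) unfolding is_trace_def by (blast intro: rtranclp.rtrancl_into_rtrancl)
qed simp

lemma finite_range_trace: "is_trace \<tau> \<Longrightarrow> tidy (\<tau> 0) \<Longrightarrow> finite (range \<tau>)"
  by (rule finite_subset[OF _ finite_Clos]) (auto simp: Clos_def intro: trace_rtranclp)


section \<open>Closure order and alternating chains\<close>

lemma reach_in_free_occ: "reach_in \<psi> \<rho> \<sigma> \<Longrightarrow> free_occ \<psi> \<sigma>"
  unfolding reach_in_def free_sub_iff_free_occ[symmetric] by auto

definition free_step :: "'p fml \<Rightarrow> 'p fml \<Rightarrow> 'p fml \<Rightarrow> bool" where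
  "free_step \<psi> \<rho> \<sigma> \<longleftrightarrow> step \<rho> \<sigma> \<and> free_occ \<psi> \<sigma>"

lemma reach_in_iff_rtranclp: "reach_in \<psi> \<rho> \<sigma> \<longleftrightarrow> free_occ \<psi> \<rho> \<and> (free_step \<psi>)\<^sup>*\<^sup>* \<rho> \<sigma>"
proof
  assume "reach_in \<psi> \<rho> \<sigma>"
  then obtain n f where f: "f 0 = \<rho>" "f n = \<sigma>" "\<forall>i<n. step (f i) (f (Suc i))"
    "\<forall>i\<le>n. free_occ \<psi> (f i)"
    unfolding reach_in_def free_sub_iff_free_occ by blast
  have "(free_step \<psi>)\<^sup>*\<^sup>* (f 0) (f k)" if "k \<le> n" for k
    using that f(3,4) by (induction k) (auto simp: free_step_def intro: rtranclp.rtrancl_into_rtrancl)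
  then show "free_occ \<psi> \<rho> \<and> (free_step \<psi>)\<^sup>*\<^sup>* \<rho> \<sigma>" using f by auto
next
  assume "free_occ \<psi> \<rho> \<and> (free_step \<psi>)\<^sup>*\<^sup>* \<rho> \<sigma>"
  then have "(free_step \<psi>)\<^sup>*\<^sup>* \<rho> \<sigma>" and start: "free_occ \<psi> \<rho>" by auto
  then show "reach_in \<psi> \<rho> \<sigma>"
  proof (induction rule: rtranclp_induct)
    case base
    then show ?case unfolding reach_in_def free_sub_iff_free_occ by (intro exI[of _ 0]) auto
  next
    case (step \<sigma> \<theta>)
    then obtain n f where f: "f 0 = \<rho>" "f n = \<sigma>" "\<forall>i<n. step (f i) (f (Suc i))"
      "\<forall>i\<le>n. free_occ \<psi> (f i)"
      unfolding reach_in_def free_sub_iff_free_occ by blast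
    with step.hyps(2) show ?case unfolding reach_in_def free_sub_iff_free_occ free_step_def
      by (intro exI[of _ "Suc n"] exI[of _ "f(Suc n := \<theta>)"]) (auto simp: less_Suc_eq le_Suc_eq)
  qed
qed

lemma reach_in_trans:
  assumes "reach_in \<xi> \<xi> \<psi>" and "reach_in \<psi> \<psi> \<phi>"
  shows "reach_in \<xi> \<xi> \<phi>"
proof -
  have "free_step \<psi> \<le> free_step \<xi>"
    using reach_in_free_occ[OF assms(1)] by (auto simp: free_step_def intro: free_occ_trans)
  with assms show ?thesis
    unfolding reach_in_iff_rtranclp by (blast intro: rtranclp_trans rtranclp_mono[THEN predicate2D])
qed

lemma reach_in_trace:
  assumes "is_trace \<tau>" and "m \<le> n" and "\<forall>k\<in>{m..n}. free_occ \<psi> (\<tau> k)"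
  shows "reach_in \<psi> (\<tau> m) (\<tau> n)"
  unfolding reach_in_def free_sub_iff_free_occ
proof (intro exI conjI)
  show "\<forall>i<n - m. step (\<tau> (m + i)) (\<tau> (m + Suc i))" using assms(1) by (simp add: is_trace_def)
  show "\<forall>i\<le>n - m. free_occ \<psi> (\<tau> (m + i))" using assms(2,3) by simp
qed (use assms(2) in simp_all)

lemma clos_le_free_occ: "clos_le \<phi> \<psi> \<Longrightarrow> free_occ \<psi> \<phi>"
  unfolding clos_le_def using reach_in_free_occ by blast

lemma clos_less_size: "clos_less \<phi> \<psi> \<Longrightarrow> size \<psi> < size \<phi>"
  unfolding clos_less_def
  by (metis clos_le_free_occ free_occ_size free_occ_size_eq le_neq_implies_less)

lemma clos_less_trans: "clos_less \<phi> \<psi> \<Longrightarrow> clos_less \<psi> \<chi> \<Longrightarrow> clos_less \<phi> \<chi>"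
  using clos_less_size clos_le_free_occ free_occ_size reach_in_trans
  unfolding clos_less_def clos_le_def by (metis less_le_not_le less_trans)

lemma alt_chain_singleton: "alt_chain [\<phi>] \<longleftrightarrow> is_fix \<phi> \<and> tidy \<phi>"
  unfolding alt_chain_def by auto

lemma alt_chain_Cons_Cons:
  "alt_chain (\<phi> # \<psi> # cs) \<longleftrightarrow>
     is_fix \<phi> \<and> tidy \<phi> \<and> clos_less \<phi> \<psi> \<and> fp_of \<psi> \<noteq> fp_of \<phi> \<and> alt_chain (\<psi> # cs)"
  unfolding alt_chain_def by (auto simp: All_less_Suc2)

lemma alt_chain_length_le_size: "alt_chain cs \<Longrightarrow> length cs \<le> size (hd cs)"
proof (induction cs rule: induct_list012)
  case (2 \<phi>)
  then show ?case by (cases \<phi>) (auto simp: alt_chain_singleton)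
next
  case (3 \<phi> \<psi> cs)
  then show ?case by (auto simp: alt_chain_Cons_Cons dest: clos_less_size)
qed (simp add: alt_chain_def)

lemma finite_alt_chain_lengths: "finite {length cs | cs. alt_chain cs \<and> hd cs = \<xi>}"
  by (rule finite_subset[of _ "{..size \<xi>}"]) (auto dest: alt_chain_length_le_size)

lemma alt_chain_length_le_h_up: "alt_chain cs \<Longrightarrow> length cs \<le> h_up (hd cs)"
  unfolding h_up_def by (rule Max_ge[OF finite_alt_chain_lengths]) blast

lemma h_up_attained:
  assumes "is_fix \<xi>" and "tidy \<xi>"
  obtains cs where "alt_chain cs" and "hd cs = \<xi>" and "length cs = h_up \<xi>"
proof -
  have "alt_chain [\<xi>]" using assms by (simp add: alt_chain_singleton)
  then have "h_up \<xi> \<in> {length cs | cs. alt_chain cs \<and> hd cs = \<xi>}"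
    unfolding h_up_def by (intro Max_in[OF finite_alt_chain_lengths]) force
  then show ?thesis using that by auto
qed

lemma h_up_clos_less:
  assumes "clos_less \<phi> \<xi>" and "is_fix \<phi>" and "tidy \<phi>" and "is_fix \<xi>" and "tidy \<xi>"
  shows "h_up \<xi> + (if fp_of \<phi> = fp_of \<xi> then 0 else 1) \<le> h_up \<phi>"
proof -
  txt \<open>Put \<open>\<phi>\<close> in front of a longest chain from \<open>\<xi>\<close>, in place of \<open>\<xi>\<close> if their types agree.\<close>
  obtain cs where cs: "alt_chain cs" "hd cs = \<xi>" "length cs = h_up \<xi>"
    using h_up_attained assms(4,5) .
  then obtain rest where cs_eq: "cs = \<xi> # rest" by (cases cs) (auto simp: alt_chain_def)
  show ?thesis
  proof (cases "fp_of \<phi> = fp_of \<xi>")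
    case False
    then have "alt_chain (\<phi> # cs)" using assms cs cs_eq by (simp add: alt_chain_Cons_Cons)
    then show ?thesis using alt_chain_length_le_h_up[of "\<phi> # cs"] cs False by simp
  next
    case True
    have "alt_chain (\<phi> # rest)"
    proof (cases rest)
      case Nil
      then show ?thesis using assms by (simp add: alt_chain_singleton)
    next
      case (Cons \<psi> rest')
      then show ?thesis using assms cs cs_eq True clos_less_trans[OF assms(1)]
        by (auto simp: alt_chain_Cons_Cons)
    qed
    then show ?thesis using alt_chain_length_le_h_up[of "\<phi> # rest"] cs cs_eq True by simp
  qed
qed

lemma even_Omega_g_iff: "even (Omega_g \<psi>) \<longleftrightarrow> fp_of \<psi> = Nu"
  unfolding Omega_g_def Let_def has_parity_def by (cases "fp_of \<psi>") auto

text \<open>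
\<open>\<Omega>\<^sub>g\<close> rounds \<open>d = cd - h\<up>\<close> up to the parity of the type: this rounding is monotone in \<open>d\<close> for a
fixed type, and a gap of at least one absorbs it between different types.
\<close>

lemma Omega_g_mono:
  assumes "cluster \<phi> = cluster \<xi>"
    and "h_up \<xi> + (if fp_of \<phi> = fp_of \<xi> then 0 else 1) \<le> h_up \<phi>"
  shows "Omega_g \<phi> \<le> Omega_g \<xi>"
  using assms unfolding Omega_g_def Let_def has_parity_def
  by (cases "fp_of \<phi>"; cases "fp_of \<xi>") (auto split: if_splits, presburger+)


section \<open>Infinite traces\<close>

lemma step_size_less: "step \<rho> \<sigma> \<Longrightarrow> \<not> is_fix \<rho> \<Longrightarrow> size \<sigma> < size \<rho>"
  by (cases rule: step.cases) auto

lemma eventually_recurring: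
  assumes "finite (range \<tau>)"
  shows "\<forall>\<^sub>\<infinity>n. \<exists>\<^sub>\<infinity>m. \<tau> m = \<tau> n"
proof -
  have "\<forall>\<^sub>\<infinity>n. \<tau> n = \<phi> \<longrightarrow> (\<exists>\<^sub>\<infinity>m. \<tau> m = \<phi>)" for \<phi>
    by (cases "\<exists>\<^sub>\<infinity>m. \<tau> m = \<phi>") (auto elim: MOST_mono)
  then have "\<forall>\<^sub>\<infinity>n. \<forall>\<phi>\<in>range \<tau>. \<tau> n = \<phi> \<longrightarrow> (\<exists>\<^sub>\<infinity>m. \<tau> m = \<phi>)"
    by (subst MOST_finite_Ball_distrib[OF assms]) blast
  then show ?thesis by (rule MOST_mono) blast
qed
lemma recurring_fixpoint_exists:
  assumes "is_trace \<tau>" and "\<forall>\<^sub>\<infinity>n. \<exists>\<^sub>\<infinity>m. \<tau> m = \<tau> n"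
  shows "\<exists>\<phi>. is_fix \<phi> \<and> (\<exists>\<^sub>\<infinity>n. \<tau> n = \<phi>)"
proof (rule ccontr)
  assume "\<not> ?thesis"
  with assms(2) obtain N where no_fix: "\<forall>n\<ge>N. \<not> is_fix (\<tau> n)"
    unfolding MOST_nat_le by blast
  have "size (\<tau> (N + k)) + k \<le> size (\<tau> N)" for k
  proof (induction k)
    case (Suc k)
    have "size (\<tau> (Suc (N + k))) < size (\<tau> (N + k))"
      using assms(1) no_fix by (intro step_size_less) (auto simp: is_trace_def)
    with Suc show ?case by simp
  qed simp
  from this[of "Suc (size (\<tau> N))"] show False by simp
qed

lemma trace_free_occ_not_created:
  assumes "is_trace \<tau>" and "\<forall>k\<ge>n. \<not> (is_fix (\<tau> k) \<and> size (\<tau> k) < size \<xi>)"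
    and "\<not> free_occ \<xi> (\<tau> n)" and "n \<le> k"
  shows "\<not> free_occ \<xi> (\<tau> k)"
  using assms(4)
proof (induction k rule: dec_induct)
  case (step k)
  then show ?case
    using assms(1,2) step_creates_free_occ[of "\<tau> k" "\<tau> (Suc k)" \<xi>] by (auto simp: is_trace_def)
qed (fact assms(3))

lemma persistent_fixpoint_exists:
  assumes "is_trace \<tau>" and "finite (range \<tau>)"
  shows "\<exists>\<xi>. is_fix \<xi> \<and> (\<exists>\<^sub>\<infinity>n. \<tau> n = \<xi>) \<and> (\<forall>\<^sub>\<infinity>n. reach_in \<xi> \<xi> (\<tau> n))"
proof -
  have recurring: "\<forall>\<^sub>\<infinity>n. \<exists>\<^sub>\<infinity>m. \<tau> m = \<tau> n"
    using assms(2) by (rule eventually_recurring)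
  then obtain N where N: "\<forall>n\<ge>N. \<exists>\<^sub>\<infinity>m. \<tau> m = \<tau> n"
    unfolding MOST_nat_le by blast
  obtain \<phi> where "is_fix \<phi> \<and> (\<exists>\<^sub>\<infinity>n. \<tau> n = \<phi>)"
    using recurring_fixpoint_exists[OF assms(1) recurring] by blast
  from ex_has_least_nat[where P = "\<lambda>\<phi>. is_fix \<phi> \<and> (\<exists>\<^sub>\<infinity>n. \<tau> n = \<phi>)" and m = size, OF this]
  obtain \<xi> where \<xi>: "is_fix \<xi>" "\<exists>\<^sub>\<infinity>n. \<tau> n = \<xi>"
    and least: "\<forall>\<phi>. is_fix \<phi> \<and> (\<exists>\<^sub>\<infinity>n. \<tau> n = \<phi>) \<longrightarrow> size \<xi> \<le> size \<phi>"
    by blast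
  obtain m where m: "m \<ge> N" "\<tau> m = \<xi>"
    using \<xi>(2) unfolding INFM_nat_le by blast
  have no_smaller: "\<forall>k\<ge>n. \<not> (is_fix (\<tau> k) \<and> size (\<tau> k) < size \<xi>)" if "n \<ge> N" for n
    using that N least by (auto simp: not_less)
  have "free_occ \<xi> (\<tau> n)" if "n \<ge> m" for n
  proof (rule ccontr)
    assume "\<not> free_occ \<xi> (\<tau> n)"
    moreover obtain k where "k \<ge> n" "\<tau> k = \<xi>"
      using \<xi>(2) unfolding INFM_nat_le by blast
    moreover have "n \<ge> N" using that m(1) by simp
    ultimately have "\<not> free_occ \<xi> \<xi>"
      using trace_free_occ_not_created[OF assms(1) no_smaller] by metis
    then show False by (simp add: free_occ.refl)
  qed
  then have "\<forall>n\<ge>m. reach_in \<xi> \<xi> (\<tau> n)"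
    using reach_in_trace[OF assms(1)] m(2) by auto
  then show ?thesis using \<xi> unfolding MOST_nat_le by blast
qed

lemma persistent_fixpoint_unique:
  assumes "\<exists>\<^sub>\<infinity>n. \<tau> n = \<xi>" and "\<forall>\<^sub>\<infinity>n. reach_in \<xi> \<xi> (\<tau> n)"
    and "\<exists>\<^sub>\<infinity>n. \<tau> n = \<xi>'" and "\<forall>\<^sub>\<infinity>n. reach_in \<xi>' \<xi>' (\<tau> n)"
  shows "\<xi> = \<xi>'"
proof -
  obtain n where "\<tau> n = \<xi>" "reach_in \<xi>' \<xi>' (\<tau> n)"
    using INFM_EX[OF INFM_conjI[OF assms(1,4)]] by blast
  moreover obtain n' where "\<tau> n' = \<xi>'" "reach_in \<xi> \<xi> (\<tau> n')"
    using INFM_EX[OF INFM_conjI[OF assms(3,2)]] by blast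
  ultimately show ?thesis using reach_in_free_occ free_occ_antisym by blast
qed

lemma recurring_rtranclp:
  assumes "is_trace \<tau>" and "\<exists>\<^sub>\<infinity>n. \<tau> n = \<phi>" and "\<exists>\<^sub>\<infinity>n. \<tau> n = \<psi>"
  shows "step\<^sup>*\<^sup>* \<phi> \<psi>"
proof -
  obtain i where "\<tau> i = \<phi>" using INFM_EX[OF assms(2)] by blast
  moreover obtain j where "j \<ge> i" "\<tau> j = \<psi>" using assms(3) unfolding INFM_nat_le by blast
  ultimately show ?thesis using trace_rtranclp[OF assms(1)] by blast
qed

lemma cluster_eqI: "step\<^sup>*\<^sup>* \<phi> \<psi> \<Longrightarrow> step\<^sup>*\<^sup>* \<psi> \<phi> \<Longrightarrow> cluster \<phi> = cluster \<psi>"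
  unfolding cluster_def clos_eq_def by (auto intro: rtranclp_trans)

lemma Omega_g_recurring_le:
  assumes "is_trace \<tau>" and "\<forall>n. tidy (\<tau> n)"
    and "is_fix \<xi>" and "\<exists>\<^sub>\<infinity>n. \<tau> n = \<xi>" and "\<forall>\<^sub>\<infinity>n. reach_in \<xi> \<xi> (\<tau> n)"
    and "is_fix \<phi>" and "\<exists>\<^sub>\<infinity>n. \<tau> n = \<phi>"
  shows "Omega_g \<phi> \<le> Omega_g \<xi>"
proof (cases "\<phi> = \<xi>")
  case False
  obtain n where n: "\<tau> n = \<phi>" "reach_in \<xi> \<xi> (\<tau> n)"
    using INFM_EX[OF INFM_conjI[OF assms(7,5)]] by blast
  then have "clos_le \<phi> \<xi>" using assms(3,6) by (simp add: clos_le_def)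
  moreover have "\<not> clos_le \<xi> \<phi>"
    using calculation False clos_le_free_occ free_occ_antisym by blast
  ultimately have "clos_less \<phi> \<xi>" by (simp add: clos_less_def)
  moreover have "tidy \<phi>" using assms(2) n(1) by blast
  moreover have "tidy \<xi>" using assms(2) INFM_EX[OF assms(4)] by blast
  ultimately have "h_up \<xi> + (if fp_of \<phi> = fp_of \<xi> then 0 else 1) \<le> h_up \<phi>"
    using assms(3,6) by (intro h_up_clos_less)
  moreover have "cluster \<phi> = cluster \<xi>"
    using assms(1,4,7) by (intro cluster_eqI recurring_rtranclp)
  ultimately show ?thesis by (intro Omega_g_mono)
qed simp

lemma Max_Omega_g_recurring:
  assumes "is_trace \<tau>" and "\<forall>n. tidy (\<tau> n)"
    and "is_fix \<xi>" and "\<exists>\<^sub>\<infinity>n. \<tau> n = \<xi>" and "\<forall>\<^sub>\<infinity>n. reach_in \<xi> \<xi> (\<tau> n)"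
  shows "Max {Omega_g \<phi> | \<phi>. is_fix \<phi> \<and> (\<exists>\<^sub>\<infinity>n. \<tau> n = \<phi>)} = Omega_g \<xi>"
proof (rule Max_eqI)
  have "{\<phi>. is_fix \<phi> \<and> (\<exists>\<^sub>\<infinity>n. \<tau> n = \<phi>)} \<subseteq> range \<tau>" by (auto dest: INFM_EX)
  then have "finite {\<phi>. is_fix \<phi> \<and> (\<exists>\<^sub>\<infinity>n. \<tau> n = \<phi>)}"
    using finite_range_trace assms(1,2) finite_subset by blast
  then show "finite {Omega_g \<phi> | \<phi>. is_fix \<phi> \<and> (\<exists>\<^sub>\<infinity>n. \<tau> n = \<phi>)}"
    by (simp add: setcompr_eq_image)
next
  fix \<omega> assume "\<omega> \<in> {Omega_g \<phi> | \<phi>. is_fix \<phi> \<and> (\<exists>\<^sub>\<infinity>n. \<tau> n = \<phi>)}"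
  then show "\<omega> \<le> Omega_g \<xi>" using Omega_g_recurring_le[OF assms] by blast
qed (use assms(3,4) in blast)

theorem mainTheorem5:
  fixes \<tau> :: "nat \<Rightarrow> 'p fml"
  assumes "is_trace \<tau>" and "\<forall>n. tidy (\<tau> n)"
  shows "(\<exists>!\<xi>. is_fix \<xi> \<and> (\<exists>\<^sub>\<infinity>n. \<tau> n = \<xi>) \<and> (\<forall>\<^sub>\<infinity>n. reach_in \<xi> \<xi> (\<tau> n)))
       \<and> (\<forall>e x \<chi>. (\<exists>\<^sub>\<infinity>n. \<tau> n = Fix e x \<chi>) \<and> (\<forall>\<^sub>\<infinity>n. reach_in (Fix e x \<chi>) (Fix e x \<chi>) (\<tau> n))
            \<longrightarrow> (even (Max {Omega_g \<phi> | \<phi>. is_fix \<phi> \<and> (\<exists>\<^sub>\<infinity>n. \<tau> n = \<phi>)}) \<longleftrightarrow> e = Nu))"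
proof (intro conjI allI impI)
  have "finite (range \<tau>)" using finite_range_trace assms by blast
  then show "\<exists>!\<xi>. is_fix \<xi> \<and> (\<exists>\<^sub>\<infinity>n. \<tau> n = \<xi>) \<and> (\<forall>\<^sub>\<infinity>n. reach_in \<xi> \<xi> (\<tau> n))"
    using persistent_fixpoint_exists[OF assms(1)] persistent_fixpoint_unique by blast
next
  fix e x \<chi>
  assume "(\<exists>\<^sub>\<infinity>n. \<tau> n = Fix e x \<chi>) \<and> (\<forall>\<^sub>\<infinity>n. reach_in (Fix e x \<chi>) (Fix e x \<chi>) (\<tau> n))"
  then have "Max {Omega_g \<phi> | \<phi>. is_fix \<phi> \<and> (\<exists>\<^sub>\<infinity>n. \<tau> n = \<phi>)} = Omega_g (Fix e x \<chi>)"
    using assms by (intro Max_Omega_g_recurring) auto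
  then show "even (Max {Omega_g \<phi> | \<phi>. is_fix \<phi> \<and> (\<exists>\<^sub>\<infinity>n. \<tau> n = \<phi>)}) \<longleftrightarrow> e = Nu"
    by (simp add: even_Omega_g_iff)
qed

end
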